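(* Let $d\ge1$, let $\mathcal{H}_R,\mathcal{H}_A,\mathcal{H}_B$ all be copies of $\mathbb{C}^d$ with standard basis $\{|j\rangle\}_{j=0}^{d-1}$, and let $\mathcal{N}:\mathcal{L}(\mathcal{H}_A)\to\mathcal{L}(\mathcal{H}_B)$ be a quantum channel (completely positive trace-preserving map). Let $\{K_i\}$ be a standard Kraus decomposition of $\mathcal{N}$ (defined in the context), so that $\mathrm{Tr}(K_0^\dagger K_0)\ge \mathrm{Tr}(K_i^\dagger K_i)$ for all $i$. Define $$\mathcal{O}(\mathcal{N}):=\max\Big\{\langle\phi|_{RB}\,(\mathcal{I}_R\otimes\mathcal{N})(\rho_{RA})\,|\phi\rangle_{RB}\;:\;\rho_{RA}\succeq0,\ \mathrm{Tr}\rho_{RA}=1\Big\},$$ where $|\phi\rangle_{RB}=\frac1{\sqrt d}\sum_j|j\rangle_R|j\rangle_B$ and $\mathcal{I}_R$ is the identity map on $\mathcal{L}(\mathcal{H}_R)$. Then $$\mathcal{O}(\mathcal{N})=\frac1d\,\mathrm{Tr}(K_0^\dagger K_0)=\frac1d\,\|J^{\mathcal{N}}_{RB}\|,$$ where $\|\cdot\|$ is the operator (spectral) norm, and the maximum is attained precisely by the density operators $\Lambda_{RA}$ whose support lies in the span of $\{|K_i^\dagger\rangle_{RA}: \mathrm{Tr}(K_i^\dagger K_i)=\mathrm{Tr}(K_0^\dagger K_0)\}$.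
   Context: Choi–Jamiołkowski operator: $J^{\mathcal{N}}_{RB}=\sum_{i,j}|i\rangle\langle j|_R\otimes\mathcal{N}(|i\rangle\langle j|)$. Operator–ket duality: for a linear operator $K$ on $\mathbb{C}^d$, $|K\rangle:=\sum_j |j\rangle\otimes K|j\rangle$; in particular $|K^\dagger\rangle_{RA}:=\sum_j|j\rangle_R\otimes K^\dagger|j\rangle_A$. Standard Kraus decomposition: take an eigendecomposition $J^{\mathcal{N}}_{RB}=\sum_i e_i|L_i\rangle\langle L_i|$ with $e_0\ge e_1\ge\dots\ge0$ and $\{|L_i\rangle\}$ orthonormal, let $L_i$ be the operator with $|L_i\rangle=\sum_j|j\rangle\otimes L_i|j\rangle$, and set $K_i=\sqrt{e_i}L_i$; then $\mathcal{N}(O)=\sum_iK_iOK_i^\dagger$, $\mathrm{Tr}(K_i^\dagger K_j)=0$ for $i\neq j$ and $\mathrm{Tr}(K_i^\dagger K_i)=e_i$. *)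

theory Defs
  imports Complex_Main "Jordan_Normal_Form.Matrix"
begin

(* Conventions: C^d has standard basis e_0..e_{d-1}; C^d (x) C^d = C^(d*d) with
   |i>|j> the basis vector of index i*d + j (first factor = R, second = A or B). *)

definition mtrace :: "complex mat \<Rightarrow> complex" where
  "mtrace A = (\<Sum>i<dim_row A. A $$ (i,i))"

definition cadj :: "complex mat \<Rightarrow> complex mat" where
  "cadj A = mat (dim_col A) (dim_row A) (\<lambda>(i,j). cnj (A $$ (j,i)))"

definition sandwich :: "complex vec \<Rightarrow> complex mat \<Rightarrow> complex vec \<Rightarrow> complex" where
  "sandwich v A w = (\<Sum>i<dim_vec v. \<Sum>j<dim_vec w. cnj (v $ i) * A $$ (i,j) * w $ j)"

definition cinner :: "complex vec \<Rightarrow> complex vec \<Rightarrow> complex" where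
  "cinner v w = (\<Sum>i<dim_vec v. cnj (v $ i) * w $ i)"

definition vnorm :: "complex vec \<Rightarrow> real" where
  "vnorm v = sqrt (\<Sum>i<dim_vec v. (cmod (v $ i))\<^sup>2)"

definition psd :: "nat \<Rightarrow> complex mat \<Rightarrow> bool" where
  "psd n A \<longleftrightarrow> A \<in> carrier_mat n n \<and>
     (\<forall>v \<in> carrier_vec n. Im (sandwich v A v) = 0 \<and> Re (sandwich v A v) \<ge> 0)"

definition density :: "nat \<Rightarrow> complex mat \<Rightarrow> bool" where
  "density n \<rho> \<longleftrightarrow> psd n \<rho> \<and> mtrace \<rho> = 1"

definition opnorm :: "complex mat \<Rightarrow> real" where
  "opnorm A = Sup {vnorm (A *\<^sub>v v) | v. v \<in> carrier_vec (dim_col A) \<and> vnorm v = 1}"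

definition unit_mat :: "nat \<Rightarrow> nat \<Rightarrow> nat \<Rightarrow> complex mat" where
  "unit_mat d i j = mat d d (\<lambda>(x,y). if x = i \<and> y = j then 1 else 0)"

(* (i,j) block of a (k*d) x (k*d) matrix, i.e. the d x d operator rho_ij with
   rho = sum_{i,j} |i><j| (x) rho_ij *)
definition block :: "nat \<Rightarrow> complex mat \<Rightarrow> nat \<Rightarrow> nat \<Rightarrow> complex mat" where
  "block d \<rho> i j = mat d d (\<lambda>(x,y). \<rho> $$ (i*d + x, j*d + y))"

(* (I_k (x) N)(rho) = sum_{i,j} |i><j| (x) N(rho_ij) *)
definition id_tensor :: "nat \<Rightarrow> nat \<Rightarrow> (complex mat \<Rightarrow> complex mat) \<Rightarrow> complex mat \<Rightarrow> complex mat" where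
  "id_tensor k d N \<rho> = mat (k*d) (k*d)
     (\<lambda>(a,b). N (block d \<rho> (a div d) (b div d)) $$ (a mod d, b mod d))"

definition quantum_channel :: "nat \<Rightarrow> (complex mat \<Rightarrow> complex mat) \<Rightarrow> bool" where
  "quantum_channel d N \<longleftrightarrow>
     (\<forall>A \<in> carrier_mat d d. N A \<in> carrier_mat d d) \<and>
     (\<forall>A \<in> carrier_mat d d. \<forall>B \<in> carrier_mat d d. N (A + B) = N A + N B) \<and>
     (\<forall>A \<in> carrier_mat d d. \<forall>c. N (c \<cdot>\<^sub>m A) = c \<cdot>\<^sub>m N A) \<and>
     (\<forall>k \<rho>. k > 0 \<longrightarrow> psd (k*d) \<rho> \<longrightarrow> psd (k*d) (id_tensor k d N \<rho>)) \<and>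
     (\<forall>A \<in> carrier_mat d d. mtrace (N A) = mtrace A)"

definition choi :: "nat \<Rightarrow> (complex mat \<Rightarrow> complex mat) \<Rightarrow> complex mat" where
  "choi d N = mat (d*d) (d*d)
     (\<lambda>(a,b). N (unit_mat d (a div d) (b div d)) $$ (a mod d, b mod d))"

(* operator-ket duality: |K> = sum_j |j> (x) K|j>, so entry j*d + x is K(x,j) *)
definition opket :: "nat \<Rightarrow> complex mat \<Rightarrow> complex vec" where
  "opket d K = vec (d*d) (\<lambda>a. K $$ (a mod d, a div d))"

definition ket_op :: "nat \<Rightarrow> complex vec \<Rightarrow> complex mat" where
  "ket_op d v = mat d d (\<lambda>(x,j). v $ (j*d + x))"

definition max_ent :: "nat \<Rightarrow> complex vec" where
  "max_ent d = vec (d*d) (\<lambda>a. if a div d = a mod d then complex_of_real (1 / sqrt (real d)) else 0)"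

definition ent_fid :: "nat \<Rightarrow> (complex mat \<Rightarrow> complex mat) \<Rightarrow> complex mat \<Rightarrow> complex" where
  "ent_fid d N \<rho> = sandwich (max_ent d) (id_tensor d d N \<rho>) (max_ent d)"

(* O(N): maximal value over density operators rho_RA (the values are real) *)
definition chan_O :: "nat \<Rightarrow> (complex mat \<Rightarrow> complex mat) \<Rightarrow> real" where
  "chan_O d N = Sup {Re (ent_fid d N \<rho>) | \<rho>. density (d*d) \<rho>}"

definition support :: "nat \<Rightarrow> complex mat \<Rightarrow> complex vec set" where
  "support n A = {A *\<^sub>v v | v. v \<in> carrier_vec n}"

definition span_of :: "nat \<Rightarrow> (nat \<Rightarrow> complex vec) \<Rightarrow> nat set \<Rightarrow> complex vec set" where
  "span_of n s I = {w \<in> carrier_vec n. \<exists>c :: nat \<Rightarrow> complex.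
      \<forall>a < n. w $ a = (\<Sum>i\<in>I. c i * s i $ a)}"

(* standard Kraus decomposition data: eigendecomposition J = sum_i e_i |L_i><L_i|,
   e_0 >= e_1 >= ... >= 0, {L_i} orthonormal (i < d*d). *)
definition std_eigdec :: "nat \<Rightarrow> (complex mat \<Rightarrow> complex mat) \<Rightarrow> (nat \<Rightarrow> real) \<Rightarrow> (nat \<Rightarrow> complex vec) \<Rightarrow> bool" where
  "std_eigdec d N e L \<longleftrightarrow>
     (\<forall>i < d*d. L i \<in> carrier_vec (d*d)) \<and>
     (\<forall>i < d*d. \<forall>j < d*d. cinner (L i) (L j) = (if i = j then 1 else 0)) \<and>
     (\<forall>i j. i \<le> j \<longrightarrow> j < d*d \<longrightarrow> e j \<le> e i) \<and>
     (\<forall>i < d*d. e i \<ge> 0) \<and>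
     (\<forall>a < d*d. \<forall>b < d*d. choi d N $$ (a,b) =
        (\<Sum>i<d*d. complex_of_real (e i) * L i $ a * cnj (L i $ b)))"

definition kraus_of :: "nat \<Rightarrow> (nat \<Rightarrow> real) \<Rightarrow> (nat \<Rightarrow> complex vec) \<Rightarrow> nat \<Rightarrow> complex mat" where
  "kraus_of d e L i = complex_of_real (sqrt (e i)) \<cdot>\<^sub>m ket_op d (L i)"

end

theory Submission
  imports Defs "Jordan_Normal_Form.Determinant"
begin

(* Expanding the maximally entangled state gives
   <phi|(I (x) N)(rho)|phi> = (1/d) sum_{a,b} rho_ab J_{s a, s b},
   where s swaps the two tensor factors. Inserting the eigendecomposition of J, this becomes
   (1/d) sum_k e_k <m_k|rho|m_k>, where m_k = |K_k^dagger>/sqrt(e_k) is the conjugated and swapped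
   eigenvector L_k; the m_k again form an orthonormal basis. For a density operator the weights
   <m_k|rho|m_k> are nonnegative and sum to Tr rho = 1, so the value is at most e_0/d, with equality
   iff rho gives no weight to the m_k with e_k < e_0. For positive rho this means that rho annihilates
   those m_k, i.e. that its support lies in the span of the remaining ones. Finally, e_0 is the
   largest eigenvalue of the positive operator J, hence its operator norm, and Tr(K_k^dagger K_k) = e_k. *)

lemma sum_lessThan_mult_blocks:
  fixes k d :: nat
  shows "(\<Sum>a<k*d. f a) = (\<Sum>i<k. \<Sum>x<d. f (i*d + x))"
proof -
  have "(\<Sum>a<k*d. f a) = (\<Sum>i<k. \<Sum>a\<in>{i*d..<i*d+d}. f a)"
    by (rule sum.nat_group[symmetric])
  also have "\<dots> = (\<Sum>i<k. \<Sum>x<d. f (i*d + x))"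
  proof (rule sum.cong[OF refl])
    fix i
    show "(\<Sum>a\<in>{i*d..<i*d+d}. f a) = (\<Sum>x<d. f (i*d + x))"
      using sum.shift_bounds_nat_ivl[of f 0 "i*d" d] by (simp add: atLeast0LessThan add.commute)
  qed
  finally show ?thesis .
qed

lemma sum_rotate3:
  "(\<Sum>a\<in>A. \<Sum>k\<in>B. \<Sum>j\<in>C. X a k j) = (\<Sum>k\<in>B. \<Sum>j\<in>C. \<Sum>a\<in>A. X a k j)"
proof -
  have "(\<Sum>a\<in>A. \<Sum>k\<in>B. \<Sum>j\<in>C. X a k j) = (\<Sum>k\<in>B. \<Sum>a\<in>A. \<Sum>j\<in>C. X a k j)"
    by (rule sum.swap)
  also have "\<dots> = (\<Sum>k\<in>B. \<Sum>j\<in>C. \<Sum>a\<in>A. X a k j)"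
    by (rule sum.cong[OF refl]) (rule sum.swap)
  finally show ?thesis .
qed

lemma block_index_less:
  fixes i d x :: nat
  assumes "i < d" "x < d"
  shows "i*d + x < d*d"
proof -
  have "i*d + x < (i + 1)*d"
    using assms(2) by simp
  also have "\<dots> \<le> d*d"
    using assms(1) by (intro mult_le_mono1) simp
  finally show ?thesis .
qed

definition swap_index :: "nat \<Rightarrow> nat \<Rightarrow> nat" where
  "swap_index d a = (a mod d) * d + a div d"

lemma swap_index_block: "x < d \<Longrightarrow> swap_index d (i*d + x) = x*d + i"
  unfolding swap_index_def by simp

lemma div_mod_less_if_less_square:
  fixes a d :: nat
  assumes "a < d*d"
  shows "a mod d < d" "a div d < d"
proof -
  have "0 < d"
    using assms by (cases d) auto
  then show "a mod d < d" "a div d < d"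
    using assms by (auto simp: less_mult_imp_div_less)
qed

lemma swap_index_less: "a < d*d \<Longrightarrow> swap_index d a < d*d"
  unfolding swap_index_def by (intro block_index_less div_mod_less_if_less_square)

lemma swap_index_swap_index: "a < d*d \<Longrightarrow> swap_index d (swap_index d a) = a"
  using swap_index_block[OF div_mod_less_if_less_square(2)] unfolding swap_index_def[of d a] by simp

lemma inj_on_swap_index: "inj_on (swap_index d) {..<d*d}"
  by (rule inj_on_inverseI[of _ "swap_index d"]) (simp add: swap_index_swap_index)

definition swap_conj :: "nat \<Rightarrow> complex vec \<Rightarrow> nat \<Rightarrow> complex" where
  "swap_conj d v a = cnj (v $ swap_index d a)"

definition sesq ::
    "nat \<Rightarrow> complex mat \<Rightarrow> (nat \<Rightarrow> complex) \<Rightarrow> (nat \<Rightarrow> complex) \<Rightarrow> complex" where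
  "sesq n A f g = (\<Sum>i<n. \<Sum>j<n. cnj (f i) * A $$ (i,j) * g j)"

lemma sandwich_vec: "sandwich (vec n f) A (vec n g) = sesq n A f g"
  unfolding sandwich_def sesq_def by simp

lemma psd_sesq_nonneg: "psd n A \<Longrightarrow> Im (sesq n A f f) = 0 \<and> 0 \<le> Re (sesq n A f f)"
  unfolding psd_def by (metis sandwich_vec vec_carrier)

lemma sesq_add_scaled:
  "sesq n A (\<lambda>a. f a + s * g a) (\<lambda>a. f a + s * g a)
     = sesq n A f f + s * sesq n A f g + cnj s * sesq n A g f + cnj s * s * sesq n A g g"
  unfolding sesq_def by (simp add: sum.distrib sum_distrib_left algebra_simps)

lemma sesq_mult_mat_vec:
  "A \<in> carrier_mat n n \<Longrightarrow> v \<in> carrier_vec n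
     \<Longrightarrow> sesq n A f (\<lambda>j. v $ j) = (\<Sum>a<n. cnj (f a) * (A *\<^sub>v v) $ a)"
  unfolding sesq_def
  by (simp add: scalar_prod_def row_def atLeast0LessThan sum_distrib_left mult.assoc)

lemma eq_0_if_sesquilinear_nonneg:
  fixes B B' Q :: complex
  assumes nonneg: "\<And>s. Im (s*B + cnj s*B' + cnj s*s*Q) = 0 \<and> 0 \<le> Re (s*B + cnj s*B' + cnj s*s*Q)"
    and Q: "Im Q = 0" "Re Q \<ge> 0"
  shows "B = 0"
proof -
  from nonneg[of 1] Q have 1: "Im B + Im B' = 0" by simp
  from nonneg[of \<i>] Q have 2: "Re B - Re B' = 0" by simp
  define t where "t = 1 / (Re Q + 1)"
  have t: "t > 0" "t * Re Q < 1" using Q unfolding t_def by (auto simp: field_simps)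
  obtain x y where B: "B = Complex x y" by (metis complex.exhaust)
  have B': "B' = Complex x (-y)" using 1 2 B by (simp add: complex_eq_iff)
  \<comment> \<open>test with \<open>s = -t cnj B\<close>, small enough that the linear term dominates\<close>
  from nonneg[of "complex_of_real (-t) * cnj B"] Q B B'
  have "0 \<le> -2*t*(x^2+y^2) + t^2*(x^2+y^2)*Re Q"
    by (simp add: algebra_simps power2_eq_square)
  then have "0 \<le> t*(x^2+y^2)*(t*Re Q - 2)"
    by (simp add: algebra_simps power2_eq_square)
  moreover have "t*Re Q - 2 < 0"
    using t by simp
  ultimately have "t*(x^2+y^2) \<le> 0"
    by (metis linorder_not_le mult_pos_neg)
  then have "x^2 + y^2 \<le> 0"
    using t by (simp add: mult_le_0_iff)
  then show ?thesis
    using B by (simp add: complex_eq_iff sum_power2_le_zero_iff)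
qed

lemma psd_sesq_eq_0:
  assumes "psd n A" "sesq n A f f = 0"
  shows "sesq n A f g = 0"
proof (rule eq_0_if_sesquilinear_nonneg[of _ "sesq n A g f" "sesq n A g g"])
  fix s
  show "Im (s * sesq n A f g + cnj s * sesq n A g f + cnj s * s * sesq n A g g) = 0 \<and>
          0 \<le> Re (s * sesq n A f g + cnj s * sesq n A g f + cnj s * s * sesq n A g g)"
    using psd_sesq_nonneg[OF assms(1), of "\<lambda>a. f a + s * g a"] assms(2)
    by (simp add: sesq_add_scaled)
  show "Im (sesq n A g g) = 0" "0 \<le> Re (sesq n A g g)"
    using psd_sesq_nonneg[OF assms(1)] by auto
qed

definition orthonormal :: "nat \<Rightarrow> (nat \<Rightarrow> nat \<Rightarrow> complex) \<Rightarrow> bool" where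
  "orthonormal n f \<longleftrightarrow>
     (\<forall>i<n. \<forall>j<n. (\<Sum>a<n. cnj (f i a) * f j a) = (if i = j then 1 else 0))"

lemma orthonormalD:
  "orthonormal n f \<Longrightarrow> i < n \<Longrightarrow> j < n
    \<Longrightarrow> (\<Sum>a<n. cnj (f i a) * f j a) = (if i = j then 1 else 0)"
  unfolding orthonormal_def by blast

lemma sum_right_inverse_if_left_inverse:
  fixes g h :: "nat \<Rightarrow> nat \<Rightarrow> 'a::field"
  assumes "\<forall>i<n. \<forall>j<n. (\<Sum>a<n. g i a * h a j) = (if i = j then 1 else 0)"
  shows "\<forall>a<n. \<forall>b<n. (\<Sum>k<n. h a k * g k b) = (if a = b then 1 else 0)"
proof -
  have entry: "(mat n n (\<lambda>(i,a). p i a) * mat n n (\<lambda>(a,j). q a j)) $$ (i,j) = (\<Sum>a<n. p i a * q a j)"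
    if "i < n" "j < n" for p q :: "nat \<Rightarrow> nat \<Rightarrow> 'a" and i j
    using that by (simp add: scalar_prod_def row_def col_def atLeast0LessThan)
  have "mat n n (\<lambda>(i,a). g i a) * mat n n (\<lambda>(a,j). h a j) = 1\<^sub>m n"
  proof (rule eq_matI)
    fix i j assume "i < dim_row (1\<^sub>m n)" "j < dim_col (1\<^sub>m n)"
    then show "(mat n n (\<lambda>(i,a). g i a) * mat n n (\<lambda>(a,j). h a j)) $$ (i,j) = 1\<^sub>m n $$ (i,j)"
      using assms entry[of i j g h] by simp
  qed auto
  then have inverse: "mat n n (\<lambda>(a,j). h a j) * mat n n (\<lambda>(i,a). g i a) = 1\<^sub>m n"
    by (rule mat_mult_left_right_inverse[rotated 2]) auto
  show ?thesis
  proof (intro allI impI)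
    fix a b assume "a < n" "b < n"
    then show "(\<Sum>k<n. h a k * g k b) = (if a = b then 1 else 0)"
      using entry[of a b h g] inverse by simp
  qed
qed

lemma orthonormal_complete:
  assumes "orthonormal n f" "a < n" "b < n"
  shows "(\<Sum>k<n. f k a * cnj (f k b)) = (if a = b then 1 else 0)"
  using sum_right_inverse_if_left_inverse[of n "\<lambda>i a. cnj (f i a)" "\<lambda>a j. f j a"] assms
  unfolding orthonormal_def by auto

lemma orthonormal_if_complete:
  assumes "\<forall>a<n. \<forall>b<n. (\<Sum>k<n. f k a * cnj (f k b)) = (if a = b then 1 else 0)"
  shows "orthonormal n f"
  using sum_right_inverse_if_left_inverse[of n "\<lambda>a k. f k a" "\<lambda>k b. cnj (f k b)"] assms
  unfolding orthonormal_def by simp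

lemma orthonormal_reindex_cnj:
  assumes "orthonormal n f" and \<sigma>: "\<And>a. a < n \<Longrightarrow> \<sigma> a < n" "inj_on \<sigma> {..<n}"
  shows "orthonormal n (\<lambda>k a. cnj (f k (\<sigma> a)))"
proof (rule orthonormal_if_complete, intro allI impI)
  fix a b assume ab: "a < n" "b < n"
  have "(\<Sum>k<n. cnj (f k (\<sigma> a)) * cnj (cnj (f k (\<sigma> b)))) = (\<Sum>k<n. f k (\<sigma> b) * cnj (f k (\<sigma> a)))"
    by (simp add: mult.commute)
  also have "\<dots> = (if \<sigma> b = \<sigma> a then 1 else 0)"
    using orthonormal_complete[OF assms(1)] \<sigma>(1) ab by simp
  also have "\<dots> = (if a = b then 1 else 0)"
    using \<sigma>(2) ab by (auto dest: inj_onD)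
  finally show "(\<Sum>k<n. cnj (f k (\<sigma> a)) * cnj (cnj (f k (\<sigma> b)))) = (if a = b then 1 else 0)" .
qed

lemma orthonormal_expansion:
  assumes "orthonormal n f" "a < n"
  shows "v a = (\<Sum>k<n. (\<Sum>b<n. cnj (f k b) * v b) * f k a)"
proof -
  have "(\<Sum>k<n. (\<Sum>b<n. cnj (f k b) * v b) * f k a) = (\<Sum>k<n. \<Sum>b<n. v b * (f k a * cnj (f k b)))"
    by (simp add: sum_distrib_left sum_distrib_right mult_ac)
  also have "\<dots> = (\<Sum>b<n. v b * (\<Sum>k<n. f k a * cnj (f k b)))"
    unfolding sum_distrib_left by (rule sum.swap)
  also have "\<dots> = (\<Sum>b<n. v b * (if a = b then 1 else 0))"
    using orthonormal_complete[OF assms(1) assms(2)] by simp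
  also have "\<dots> = v a"
    using assms(2) by (simp add: if_distrib cong: if_cong)
  finally show ?thesis by simp
qed

lemma of_real_sum_cmod_squares: "complex_of_real (\<Sum>a\<in>A. (cmod (z a))\<^sup>2) = (\<Sum>a\<in>A. cnj (z a) * z a)"
  unfolding of_real_sum complex_norm_square by (simp add: mult.commute)

lemma orthonormal_norm_combination:
  assumes "orthonormal n f"
  shows "(\<Sum>a<n. (cmod (\<Sum>k<n. z k * f k a))\<^sup>2) = (\<Sum>k<n. (cmod (z k))\<^sup>2)"
proof -
  have "complex_of_real (\<Sum>a<n. (cmod (\<Sum>k<n. z k * f k a))\<^sup>2)
      = (\<Sum>a<n. \<Sum>k<n. \<Sum>j<n. cnj (z k) * z j * (cnj (f k a) * f j a))"
    unfolding of_real_sum_cmod_squares by (simp add: cnj_sum sum_distrib_left sum_distrib_right algebra_simps)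
  also have "\<dots> = (\<Sum>k<n. \<Sum>j<n. \<Sum>a<n. cnj (z k) * z j * (cnj (f k a) * f j a))"
    by (rule sum_rotate3)
  also have "\<dots> = (\<Sum>k<n. \<Sum>j<n. cnj (z k) * z j * (\<Sum>a<n. cnj (f k a) * f j a))"
    by (simp add: sum_distrib_left)
  also have "\<dots> = (\<Sum>k<n. \<Sum>j<n. cnj (z k) * z j * (if k = j then 1 else 0))"
    by (intro sum.cong refl) (simp add: orthonormalD[OF assms])
  also have "\<dots> = (\<Sum>k<n. cnj (z k) * z k)"
    by (simp add: if_distrib cong: if_cong)
  also have "\<dots> = complex_of_real (\<Sum>k<n. (cmod (z k))\<^sup>2)"
    by (rule of_real_sum_cmod_squares[symmetric])
  finally show ?thesis by (rule of_real_eq_iff[THEN iffD1])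
qed

lemma orthonormal_parseval:
  assumes "orthonormal n f"
  shows "(\<Sum>k<n. (cmod (\<Sum>b<n. cnj (f k b) * v b))\<^sup>2) = (\<Sum>a<n. (cmod (v a))\<^sup>2)"
  using orthonormal_norm_combination[OF assms, of "\<lambda>k. \<Sum>b<n. cnj (f k b) * v b"]
    orthonormal_expansion[OF assms, of _ v]
  by simp

lemma sum_sesq_orthonormal:
  assumes "orthonormal n m" "A \<in> carrier_mat n n"
  shows "(\<Sum>k<n. sesq n A (m k) (m k)) = mtrace A"
proof -
  have "(\<Sum>k<n. sesq n A (m k) (m k)) = (\<Sum>k<n. \<Sum>a<n. \<Sum>b<n. A $$ (a,b) * (m k b * cnj (m k a)))"
    unfolding sesq_def by (simp add: mult_ac)
  also have "\<dots> = (\<Sum>a<n. \<Sum>b<n. \<Sum>k<n. A $$ (a,b) * (m k b * cnj (m k a)))"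
    by (rule sum_rotate3)
  also have "\<dots> = (\<Sum>a<n. \<Sum>b<n. A $$ (a,b) * (\<Sum>k<n. m k b * cnj (m k a)))"
    by (simp add: sum_distrib_left)
  also have "\<dots> = (\<Sum>a<n. \<Sum>b<n. A $$ (a,b) * (if b = a then 1 else 0))"
    by (intro sum.cong refl) (simp add: orthonormal_complete[OF assms(1)])
  also have "\<dots> = (\<Sum>a<n. A $$ (a,a))"
    by (simp add: if_distrib cong: if_cong)
  finally show ?thesis
    unfolding mtrace_def using assms(2) by simp
qed

lemma weighted_average_le_max:
  fixes e r :: "nat \<Rightarrow> real"
  assumes "\<forall>k<n. e k \<le> e 0" "\<forall>k<n. 0 \<le> r k" "(\<Sum>k<n. r k) = 1"
  shows "(\<Sum>k<n. e k * r k) \<le> e 0 \<and>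
         ((\<Sum>k<n. e k * r k) = e 0 \<longleftrightarrow> (\<forall>k<n. e k \<noteq> e 0 \<longrightarrow> r k = 0))"
proof -
  have "e 0 = (\<Sum>k<n. e 0 * r k)"
    using assms(3) by (simp add: sum_distrib_left[symmetric])
  then have gap: "e 0 - (\<Sum>k<n. e k * r k) = (\<Sum>k<n. (e 0 - e k) * r k)"
    by (simp add: sum_subtractf left_diff_distrib)
  have nonneg: "\<forall>k\<in>{..<n}. 0 \<le> (e 0 - e k) * r k"
    using assms by simp
  have "(\<Sum>k<n. (e 0 - e k) * r k) = 0 \<longleftrightarrow> (\<forall>k\<in>{..<n}. (e 0 - e k) * r k = 0)"
    using nonneg by (intro sum_nonneg_eq_0_iff) auto
  also have "\<dots> \<longleftrightarrow> (\<forall>k<n. e k \<noteq> e 0 \<longrightarrow> r k = 0)"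
  proof -
    have "(e 0 - e k) * r k = 0 \<longleftrightarrow> (e k \<noteq> e 0 \<longrightarrow> r k = 0)" for k
      by (cases "e k = e 0") auto
    then show ?thesis
      by (simp add: Ball_def)
  qed
  finally have gap_0_iff:
    "(\<Sum>k<n. (e 0 - e k) * r k) = 0 \<longleftrightarrow> (\<forall>k<n. e k \<noteq> e 0 \<longrightarrow> r k = 0)" .
  have "0 \<le> (\<Sum>k<n. (e 0 - e k) * r k)"
    by (rule sum_nonneg) (use nonneg in blast)
  then have "(\<Sum>k<n. e k * r k) \<le> e 0"
    using gap by linarith
  moreover have "(\<Sum>k<n. e k * r k) = e 0 \<longleftrightarrow> (\<Sum>k<n. (e 0 - e k) * r k) = 0"
    using gap by linarith
  ultimately show ?thesis
    using gap_0_iff by blast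
qed

lemma density_weighted_sesq_le_max:
  fixes e :: "nat \<Rightarrow> real"
  assumes "orthonormal n m" "\<forall>k<n. e k \<le> e 0" "density n \<rho>"
  shows "(\<Sum>k<n. e k * Re (sesq n \<rho> (m k) (m k))) \<le> e 0 \<and>
    ((\<Sum>k<n. e k * Re (sesq n \<rho> (m k) (m k))) = e 0
      \<longleftrightarrow> (\<forall>k<n. e k \<noteq> e 0 \<longrightarrow> sesq n \<rho> (m k) (m k) = 0))"
proof -
  have psd: "psd n \<rho>" and car: "\<rho> \<in> carrier_mat n n" and tr: "mtrace \<rho> = 1"
    using assms(3) unfolding density_def psd_def by auto
  have nonneg: "\<forall>k<n. 0 \<le> Re (sesq n \<rho> (m k) (m k))"
    using psd_sesq_nonneg[OF psd] by blast
  have "(\<Sum>k<n. Re (sesq n \<rho> (m k) (m k))) = 1"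
    unfolding Re_sum[symmetric] sum_sesq_orthonormal[OF assms(1) car] tr by simp
  moreover have "Re (sesq n \<rho> (m k) (m k)) = 0 \<longleftrightarrow> sesq n \<rho> (m k) (m k) = 0" for k
    using psd_sesq_nonneg[OF psd, of "m k"] by (simp add: complex_eq_iff)
  ultimately show ?thesis
    using weighted_average_le_max[OF assms(2) nonneg] by presburger
qed

definition outer :: "nat \<Rightarrow> (nat \<Rightarrow> complex) \<Rightarrow> complex mat" where
  "outer n f = mat n n (\<lambda>(a,b). f a * cnj (f b))"

lemma sesq_outer: "sesq n (outer n f) g g = cnj (\<Sum>a<n. cnj (f a) * g a) * (\<Sum>a<n. cnj (f a) * g a)"
  unfolding sesq_def outer_def
  by (simp add: cnj_sum sum_product mult_ac)

lemma psd_outer: "psd n (outer n f)"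
  unfolding psd_def
proof (intro conjI ballI)
  fix v :: "complex vec" assume "v \<in> carrier_vec n"
  then have "v = vec n (\<lambda>a. v $ a)"
    by auto
  then have "sandwich v (outer n f) v = sesq n (outer n f) (\<lambda>a. v $ a) (\<lambda>a. v $ a)"
    by (metis sandwich_vec)
  also have "\<dots> = complex_of_real ((cmod (\<Sum>a<n. cnj (f a) * v $ a))\<^sup>2)"
    unfolding sesq_outer complex_norm_square by (rule mult.commute)
  finally show "Im (sandwich v (outer n f) v) = 0" "0 \<le> Re (sandwich v (outer n f) v)"
    by simp_all
qed (simp add: outer_def)

lemma density_outer:
  assumes "orthonormal n f" "i < n"
  shows "density n (outer n (f i))"
  using psd_outer orthonormalD[OF assms(1) assms(2) assms(2)]
  unfolding density_def mtrace_def outer_def by (simp add: mult.commute)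

lemma support_subset_span_if_kernel:
  fixes c :: "nat \<Rightarrow> complex" and s :: "nat \<Rightarrow> complex vec"
  assumes m: "orthonormal n m" and psd: "psd n \<Lambda>"
    and T: "T \<subseteq> {..<n}" and c: "\<forall>i\<in>T. c i \<noteq> 0"
    and s: "\<forall>i\<in>T. \<forall>a<n. s i $ a = c i * m i a"
    and kernel: "\<forall>k<n. k \<notin> T \<longrightarrow> sesq n \<Lambda> (m k) (m k) = 0"
  shows "support n \<Lambda> \<subseteq> span_of n s T"
proof
  fix w assume "w \<in> support n \<Lambda>"
  then obtain v where v: "v \<in> carrier_vec n" and w: "w = \<Lambda> *\<^sub>v v"
    unfolding support_def by auto
  have car: "\<Lambda> \<in> carrier_mat n n"
    using psd unfolding psd_def by simp
  define coeff where "coeff k = (\<Sum>b<n. cnj (m k b) * w $ b)" for k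
  have coeff_0: "coeff k = 0" if "k < n" "k \<notin> T" for k
    using psd_sesq_eq_0[OF psd kernel[rule_format, OF that], of "\<lambda>j. v $ j"]
    unfolding coeff_def w sesq_mult_mat_vec[OF car v] .
  have "w $ a = (\<Sum>i\<in>T. coeff i / c i * s i $ a)" if a: "a < n" for a
  proof -
    have "w $ a = (\<Sum>k<n. coeff k * m k a)"
      unfolding coeff_def by (rule orthonormal_expansion[OF m a])
    also have "\<dots> = (\<Sum>k\<in>T. coeff k * m k a)"
      by (rule sum.mono_neutral_right) (use T coeff_0 in auto)
    also have "\<dots> = (\<Sum>i\<in>T. coeff i / c i * s i $ a)"
      using c s a by (intro sum.cong refl) simp
    finally show ?thesis .
  qed
  moreover have "w \<in> carrier_vec n"
    using w car v by simp
  ultimately show "w \<in> span_of n s T"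
    unfolding span_of_def by (auto intro!: exI[of _ "\<lambda>i. coeff i / c i"])
qed

lemma kernel_if_support_subset_span:
  fixes c :: "nat \<Rightarrow> complex" and s :: "nat \<Rightarrow> complex vec"
  assumes m: "orthonormal n m" and car: "\<Lambda> \<in> carrier_mat n n"
    and T: "T \<subseteq> {..<n}" and s: "\<forall>i\<in>T. \<forall>a<n. s i $ a = c i * m i a"
    and span: "support n \<Lambda> \<subseteq> span_of n s T"
    and k: "k < n" "k \<notin> T"
  shows "sesq n \<Lambda> (m k) (m k) = 0"
proof -
  define v where "v = vec n (m k)"
  have v: "v \<in> carrier_vec n"
    unfolding v_def by simp
  have "\<Lambda> *\<^sub>v v \<in> support n \<Lambda>"
    unfolding support_def using v by blast
  then obtain coeff where coeff: "\<forall>a<n. (\<Lambda> *\<^sub>v v) $ a = (\<Sum>i\<in>T. coeff i * s i $ a)"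
    using span unfolding span_of_def by blast
  have "sesq n \<Lambda> (m k) (m k) = (\<Sum>a<n. cnj (m k a) * (\<Lambda> *\<^sub>v v) $ a)"
    using sesq_mult_mat_vec[OF car v, of "m k"] unfolding v_def sesq_def by simp
  also have "\<dots> = (\<Sum>a<n. \<Sum>i\<in>T. coeff i * c i * (cnj (m k a) * m i a))"
    using coeff s T by (intro sum.cong refl) (auto simp: sum_distrib_left mult_ac)
  also have "\<dots> = (\<Sum>i\<in>T. coeff i * c i * (\<Sum>a<n. cnj (m k a) * m i a))"
    unfolding sum_distrib_left by (rule sum.swap)
  also have "\<dots> = 0"
  proof (rule sum.neutral, rule ballI)
    fix i assume "i \<in> T"
    then have "i < n" "i \<noteq> k"
      using T k by auto
    then show "coeff i * c i * (\<Sum>a<n. cnj (m k a) * m i a) = 0"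
      using orthonormalD[OF m k(1)] by simp
  qed
  finally show ?thesis .
qed

lemma vnorm_mult_spectral:
  fixes e :: "nat \<Rightarrow> real"
  assumes l: "orthonormal n l" and A: "A \<in> carrier_mat n n"
    and eig: "\<And>a b. a < n \<Longrightarrow> b < n
      \<Longrightarrow> A $$ (a,b) = (\<Sum>k<n. complex_of_real (e k) * l k a * cnj (l k b))"
    and v: "v \<in> carrier_vec n"
  shows "vnorm (A *\<^sub>v v) = sqrt (\<Sum>k<n. (e k)\<^sup>2 * (cmod (\<Sum>b<n. cnj (l k b) * v $ b))\<^sup>2)"
proof -
  have "(A *\<^sub>v v) $ a = (\<Sum>k<n. (complex_of_real (e k) * (\<Sum>b<n. cnj (l k b) * v $ b)) * l k a)"
    if a: "a < n" for a
  proof -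
    have "(A *\<^sub>v v) $ a = (\<Sum>b<n. \<Sum>k<n. complex_of_real (e k) * l k a * cnj (l k b) * v $ b)"
      using a v A eig by (simp add: scalar_prod_def row_def atLeast0LessThan sum_distrib_right)
    also have "\<dots> = (\<Sum>k<n. (complex_of_real (e k) * (\<Sum>b<n. cnj (l k b) * v $ b)) * l k a)"
      by (subst sum.swap) (simp add: sum_distrib_left sum_distrib_right mult_ac)
    finally show ?thesis .
  qed
  then have "vnorm (A *\<^sub>v v)
      = sqrt (\<Sum>a<n. (cmod (\<Sum>k<n. (complex_of_real (e k) * (\<Sum>b<n. cnj (l k b) * v $ b)) * l k a))\<^sup>2)"
    unfolding vnorm_def using A by simp
  also have "\<dots> = sqrt (\<Sum>k<n. (e k)\<^sup>2 * (cmod (\<Sum>b<n. cnj (l k b) * v $ b))\<^sup>2)"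
    unfolding orthonormal_norm_combination[OF l] by (simp add: norm_mult power_mult_distrib)
  finally show ?thesis .
qed

lemma vnorm_eigvec:
  assumes l: "orthonormal n l" and "i < n"
  shows "vnorm (vec n (l i)) = 1"
proof -
  have "complex_of_real (\<Sum>a<n. (cmod (vec n (l i) $ a))\<^sup>2) = (\<Sum>a<n. cnj (l i a) * l i a)"
    unfolding of_real_sum_cmod_squares by (rule sum.cong) simp_all
  also have "\<dots> = 1"
    using orthonormalD[OF l \<open>i < n\<close> \<open>i < n\<close>] by simp
  finally have "(\<Sum>a<n. (cmod (vec n (l i) $ a))\<^sup>2) = 1"
    by (simp only: of_real_eq_1_iff)
  moreover have "dim_vec (vec n (l i)) = n"
    by simp
  ultimately show ?thesis
    unfolding vnorm_def by simp
qed

lemma vnorm_mult_eigvec: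
  fixes e :: "nat \<Rightarrow> real"
  assumes l: "orthonormal n l" and A: "A \<in> carrier_mat n n"
    and eig: "\<And>a b. a < n \<Longrightarrow> b < n
      \<Longrightarrow> A $$ (a,b) = (\<Sum>k<n. complex_of_real (e k) * l k a * cnj (l k b))"
    and "i < n" "0 \<le> e i"
  shows "vnorm (A *\<^sub>v vec n (l i)) = e i"
proof -
  define v where "v = vec n (l i)"
  have coeff: "(\<Sum>b<n. cnj (l k b) * v $ b) = (if k = i then 1 else 0)" if "k < n" for k
    using l that \<open>i < n\<close> unfolding orthonormal_def v_def by simp
  have "(\<Sum>k<n. (e k)\<^sup>2 * (cmod (\<Sum>b<n. cnj (l k b) * v $ b))\<^sup>2) = (\<Sum>k<n. if k = i then (e i)\<^sup>2 else 0)"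
    using coeff by (intro sum.cong refl) simp
  also have "\<dots> = (e i)\<^sup>2"
    using \<open>i < n\<close> by simp
  finally show ?thesis
    using vnorm_mult_spectral[OF l A eig, of v] \<open>0 \<le> e i\<close> unfolding v_def by simp
qed

lemma vnorm_mult_le_spectral:
  fixes e :: "nat \<Rightarrow> real"
  assumes l: "orthonormal n l" and A: "A \<in> carrier_mat n n"
    and eig: "\<And>a b. a < n \<Longrightarrow> b < n
      \<Longrightarrow> A $$ (a,b) = (\<Sum>k<n. complex_of_real (e k) * l k a * cnj (l k b))"
    and e: "\<forall>k<n. 0 \<le> e k \<and> e k \<le> e 0" and "0 < n"
    and v: "v \<in> carrier_vec n" "vnorm v = 1"
  shows "vnorm (A *\<^sub>v v) \<le> e 0"
proof -
  have "(\<Sum>k<n. (cmod (\<Sum>b<n. cnj (l k b) * v $ b))\<^sup>2) = 1"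
    using v orthonormal_parseval[OF l] unfolding vnorm_def by simp
  then have "(\<Sum>k<n. (e k)\<^sup>2 * (cmod (\<Sum>b<n. cnj (l k b) * v $ b))\<^sup>2) \<le> (e 0)\<^sup>2"
    using sum_mono[of "{..<n}" "\<lambda>k. (e k)\<^sup>2 * (cmod (\<Sum>b<n. cnj (l k b) * v $ b))\<^sup>2"
        "\<lambda>k. (e 0)\<^sup>2 * (cmod (\<Sum>b<n. cnj (l k b) * v $ b))\<^sup>2"]
      e by (simp add: mult_right_mono power_mono sum_distrib_left[symmetric])
  then have "sqrt (\<Sum>k<n. (e k)\<^sup>2 * (cmod (\<Sum>b<n. cnj (l k b) * v $ b))\<^sup>2) \<le> sqrt ((e 0)\<^sup>2)"
    by (rule real_sqrt_le_mono)
  moreover have "0 \<le> e 0"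
    using e \<open>0 < n\<close> by blast
  ultimately show ?thesis
    using vnorm_mult_spectral[OF l A eig v(1)] by simp
qed

lemma opnorm_spectral:
  fixes e :: "nat \<Rightarrow> real"
  assumes l: "orthonormal n l" and A: "A \<in> carrier_mat n n"
    and eig: "\<And>a b. a < n \<Longrightarrow> b < n
      \<Longrightarrow> A $$ (a,b) = (\<Sum>k<n. complex_of_real (e k) * l k a * cnj (l k b))"
    and e: "\<forall>k<n. 0 \<le> e k \<and> e k \<le> e 0" and "0 < n"
  shows "opnorm A = e 0"
  unfolding opnorm_def
proof (rule cSup_eq_maximum)
  have "vec n (l 0) \<in> carrier_vec (dim_col A)" "vnorm (vec n (l 0)) = 1"
    "vnorm (A *\<^sub>v vec n (l 0)) = e 0"
    using A vnorm_eigvec[OF l \<open>0 < n\<close>] vnorm_mult_eigvec[OF l A eig \<open>0 < n\<close>] e \<open>0 < n\<close> by auto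
  then show "e 0 \<in> {vnorm (A *\<^sub>v v) |v. v \<in> carrier_vec (dim_col A) \<and> vnorm v = 1}"
    by force
next
  fix y assume "y \<in> {vnorm (A *\<^sub>v v) |v. v \<in> carrier_vec (dim_col A) \<and> vnorm v = 1}"
  then show "y \<le> e 0"
    using vnorm_mult_le_spectral[OF l A eig e \<open>0 < n\<close>] A by auto
qed

lemma quantum_channel_restrict_entry:
  assumes qc: "quantum_channel d N" and pq: "p < d" "q < d"
    and S: "finite S" "S \<subseteq> {..<d} \<times> {..<d}"
  shows "N (mat d d (\<lambda>(x,y). if (x,y) \<in> S then A $$ (x,y) else 0)) $$ (p,q)
    = (\<Sum>(x,y)\<in>S. A $$ (x,y) * N (unit_mat d x y) $$ (p,q))"
proof -
  from qc have car: "\<forall>A\<in>carrier_mat d d. N A \<in> carrier_mat d d"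
    and add: "\<forall>A\<in>carrier_mat d d. \<forall>B\<in>carrier_mat d d. N (A + B) = N A + N B"
    and smult: "\<forall>A\<in>carrier_mat d d. \<forall>c. N (c \<cdot>\<^sub>m A) = c \<cdot>\<^sub>m N A"
    unfolding quantum_channel_def by auto
  define restrict where "restrict S = mat d d (\<lambda>(x,y). if (x,y) \<in> S then A $$ (x,y) else 0)" for S
  have unit_car: "unit_mat d x y \<in> carrier_mat d d" for x y
    unfolding unit_mat_def by auto
  have "N (restrict S) $$ (p,q) = (\<Sum>(x,y)\<in>S. A $$ (x,y) * N (unit_mat d x y) $$ (p,q))"
    using S
  proof (induction S rule: finite_induct)
    case empty
    have "restrict {} = 0 \<cdot>\<^sub>m 0\<^sub>m d d"
      unfolding restrict_def by (rule eq_matI) auto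
    moreover have "N (0 \<cdot>\<^sub>m 0\<^sub>m d d) = 0 \<cdot>\<^sub>m N (0\<^sub>m d d)"
      using smult zero_carrier_mat by blast
    ultimately have "N (restrict {}) = 0 \<cdot>\<^sub>m N (0\<^sub>m d d)"
      by (simp only:)
    moreover have "N (0\<^sub>m d d) \<in> carrier_mat d d"
      using car zero_carrier_mat by blast
    ultimately show ?case
      using pq by auto
  next
    case (insert s S)
    obtain x y where s: "s = (x,y)" "x < d" "y < d"
      using insert.prems by force
    have "restrict (insert s S) = restrict S + A $$ (x,y) \<cdot>\<^sub>m unit_mat d x y"
      unfolding restrict_def unit_mat_def s by (rule eq_matI) (use insert.hyps s in auto)
    then have "N (restrict (insert s S)) = N (restrict S) + A $$ (x,y) \<cdot>\<^sub>m N (unit_mat d x y)"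
      using add smult unit_car by (simp add: restrict_def)
    moreover have "N (restrict S) \<in> carrier_mat d d" "N (unit_mat d x y) \<in> carrier_mat d d"
      using car unit_car by (auto simp: restrict_def)
    ultimately have "N (restrict (insert s S)) $$ (p,q)
        = N (restrict S) $$ (p,q) + A $$ (x,y) * N (unit_mat d x y) $$ (p,q)"
      using pq by simp
    then show ?case
      using insert s by simp
  qed
  then show ?thesis
    unfolding restrict_def .
qed

lemma quantum_channel_entry:
  assumes qc: "quantum_channel d N" and A: "A \<in> carrier_mat d d" and pq: "p < d" "q < d"
  shows "N A $$ (p,q) = (\<Sum>x<d. \<Sum>y<d. A $$ (x,y) * N (unit_mat d x y) $$ (p,q))"
proof -
  have "mat d d (\<lambda>(x,y). if (x,y) \<in> {..<d} \<times> {..<d} then A $$ (x,y) else 0) = A"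
    by (rule eq_matI) (use A in auto)
  then show ?thesis
    using quantum_channel_restrict_entry[OF qc pq, of "{..<d} \<times> {..<d}" A]
    by (simp add: sum.cartesian_product)
qed

lemma sum_diagonal3:
  fixes F :: "nat \<Rightarrow> nat \<Rightarrow> nat \<Rightarrow> 'a::comm_monoid_add"
  assumes "i < d"
  shows "(\<Sum>x<d. \<Sum>j<d. \<Sum>y<d. if x = i \<and> y = j then F x j y else 0) = (\<Sum>j<d. F i j j)"
proof -
  have "(\<Sum>j<d. \<Sum>y<d. if x = i \<and> y = j then F x j y else 0) = (if x = i then (\<Sum>j<d. F x j j) else 0)"
    for x
    by (cases "x = i") (simp_all add: sum.delta')
  then show ?thesis
    using assms by (simp add: sum.delta')
qed

lemma dim_max_ent: "dim_vec (max_ent d) = d*d"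
  unfolding max_ent_def by simp

lemma ent_fid_blocks:
  "ent_fid d N \<rho> = (\<Sum>i<d. \<Sum>j<d. N (block d \<rho> i j) $$ (i,j)) / of_nat d"
proof -
  let ?\<phi> = "max_ent d" and ?T = "id_tensor d d N \<rho>"
  define c where "c = complex_of_real (1 / sqrt (real d))"
  have cc: "cnj c * c = 1 / of_nat d"
  proof -
    have "cnj c * c = complex_of_real (1 / sqrt (real d) * (1 / sqrt (real d)))"
      unfolding c_def by (simp only: complex_cnj_complex_of_real of_real_mult)
    also have "1 / sqrt (real d) * (1 / sqrt (real d)) = 1 / real d"
      by (simp only: times_divide_times_eq real_sqrt_mult_self abs_of_nat mult_1)
    finally show ?thesis
      by simp
  qed
  have \<phi>: "?\<phi> $ (i*d + x) = (if x = i then c else 0)" if "i < d" "x < d" for i x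
    using that block_index_less[OF that] unfolding max_ent_def c_def by simp
  have "ent_fid d N \<rho> = (\<Sum>i<d. \<Sum>x<d. \<Sum>j<d. \<Sum>y<d.
      cnj (?\<phi> $ (i*d + x)) * ?T $$ (i*d + x, j*d + y) * ?\<phi> $ (j*d + y))"
    unfolding ent_fid_def sandwich_def dim_max_ent by (simp only: sum_lessThan_mult_blocks)
  also have "\<dots> = (\<Sum>i<d. \<Sum>x<d. \<Sum>j<d. \<Sum>y<d.
      if x = i \<and> y = j then cnj c * c * ?T $$ (i*d + x, j*d + y) else 0)"
    by (intro sum.cong refl) (simp add: \<phi>)
  also have "\<dots> = (\<Sum>i<d. \<Sum>j<d. cnj c * c * ?T $$ (i*d + i, j*d + j))"
    by (intro sum.cong refl sum_diagonal3) simp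
  also have "\<dots> = (\<Sum>i<d. \<Sum>j<d. N (block d \<rho> i j) $$ (i,j)) / of_nat d"
    by (simp add: cc id_tensor_def block_index_less sum_divide_distrib)
  finally show ?thesis .
qed

lemma ent_fid_choi:
  assumes qc: "quantum_channel d N"
  shows "ent_fid d N \<rho> = (\<Sum>a<d*d. \<Sum>b<d*d. \<rho> $$ (a,b) * choi d N $$ (swap_index d a, swap_index d b))
    / of_nat d"
proof -
  define F where "F a b = \<rho> $$ (a,b) * choi d N $$ (swap_index d a, swap_index d b)" for a b
  have "N (block d \<rho> i j) $$ (i,j) = (\<Sum>x<d. \<Sum>y<d. F (i*d + x) (j*d + y))"
    if "i < d" "j < d" for i j
    using quantum_channel_entry[OF qc _ that] that
    by (simp add: F_def block_def choi_def swap_index_block block_index_less)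
  then have "(\<Sum>i<d. \<Sum>j<d. N (block d \<rho> i j) $$ (i,j))
      = (\<Sum>i<d. \<Sum>j<d. \<Sum>x<d. \<Sum>y<d. F (i*d + x) (j*d + y))"
    by simp
  also have "\<dots> = (\<Sum>i<d. \<Sum>x<d. \<Sum>j<d. \<Sum>y<d. F (i*d + x) (j*d + y))"
    by (rule sum.cong[OF refl], rule sum.swap)
  also have "\<dots> = (\<Sum>a<d*d. \<Sum>b<d*d. F a b)"
    by (simp only: sum_lessThan_mult_blocks)
  finally show ?thesis
    unfolding ent_fid_blocks F_def by simp
qed

lemma trace_choi:
  assumes qc: "quantum_channel d N"
  shows "(\<Sum>a<d*d. choi d N $$ (a,a)) = of_nat d"
proof -
  have unit: "unit_mat d i i \<in> carrier_mat d d" for i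
    unfolding unit_mat_def by simp
  have dim: "dim_row (N (unit_mat d i i)) = d" for i
    using qc unit unfolding quantum_channel_def by blast
  have "mtrace (N (unit_mat d i i)) = mtrace (unit_mat d i i)" for i
    using qc unit unfolding quantum_channel_def by blast
  moreover have "mtrace (unit_mat d i i) = 1" if "i < d" for i
    using that by (simp add: mtrace_def unit_mat_def)
  ultimately have "(\<Sum>x<d. choi d N $$ (i*d + x, i*d + x)) = 1" if "i < d" for i
    using that by (simp add: choi_def block_index_less mtrace_def dim)
  then show ?thesis
    unfolding sum_lessThan_mult_blocks by simp
qed

lemma opket_cadj_kraus_of:
  assumes "a < d*d"
  shows "opket d (cadj (kraus_of d e L i)) $ a = complex_of_real (sqrt (e i)) * swap_conj d (L i) a"
  using assms div_mod_less_if_less_square[OF assms]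
  by (simp add: opket_def cadj_def kraus_of_def ket_op_def swap_conj_def swap_index_def)

lemma mtrace_cadj_kraus_of:
  assumes "0 \<le> e i" "dim_vec (L i) = d*d"
  shows "mtrace (cadj (kraus_of d e L i) * kraus_of d e L i) = e i * cinner (L i) (L i)"
proof -
  have sq: "complex_of_real (sqrt (e i)) * (complex_of_real (sqrt (e i)) * z) = complex_of_real (e i) * z"
    for z
    using assms(1) by (simp add: mult.assoc[symmetric] abs_of_nonneg flip: of_real_mult)
  have "mtrace (cadj (kraus_of d e L i) * kraus_of d e L i)
      = (\<Sum>x<d. \<Sum>y<d. complex_of_real (e i) * (cnj (L i $ (x*d+y)) * L i $ (x*d+y)))"
    unfolding mtrace_def cadj_def kraus_of_def ket_op_def
    by (simp add: scalar_prod_def row_def col_def atLeast0LessThan mult_ac sq)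
  also have "\<dots> = e i * cinner (L i) (L i)"
    unfolding cinner_def assms(2) sum_lessThan_mult_blocks using assms(1)
    by (simp add: sum_distrib_left)
  finally show ?thesis .
qed

locale channel_eigdec =
  fixes d :: nat and N :: "complex mat \<Rightarrow> complex mat"
    and e :: "nat \<Rightarrow> real" and L :: "nat \<Rightarrow> complex vec"
  assumes dim_pos: "1 \<le> d" and channel: "quantum_channel d N" and eigdec: "std_eigdec d N e L"
begin

lemma eigvec_carrier: "i < d*d \<Longrightarrow> L i \<in> carrier_vec (d*d)"
  and eigval_nonneg: "i < d*d \<Longrightarrow> 0 \<le> e i"
  and eigval_le_eigval_0: "i < d*d \<Longrightarrow> e i \<le> e 0"
  and choi_eigdec: "a < d*d \<Longrightarrow> b < d*d
    \<Longrightarrow> choi d N $$ (a,b) = (\<Sum>k<d*d. complex_of_real (e k) * L k $ a * cnj (L k $ b))"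
  using eigdec unfolding std_eigdec_def by auto

lemma eigvec_orthonormal: "orthonormal (d*d) (\<lambda>k a. L k $ a)"
  unfolding orthonormal_def
proof (intro allI impI)
  fix i j assume ij: "i < d*d" "j < d*d"
  then have "cinner (L i) (L j) = (if i = j then 1 else 0)"
    using eigdec unfolding std_eigdec_def by blast
  moreover have "dim_vec (L i) = d*d"
    using eigvec_carrier[OF ij(1)] by simp
  ultimately show "(\<Sum>a<d*d. cnj (L i $ a) * L j $ a) = (if i = j then 1 else 0)"
    unfolding cinner_def by simp
qed

lemma swap_conj_eigvec_orthonormal: "orthonormal (d*d) (\<lambda>k. swap_conj d (L k))"
  using orthonormal_reindex_cnj[OF eigvec_orthonormal swap_index_less inj_on_swap_index]
  unfolding swap_conj_def .

lemma ent_fid_eigdec: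
  assumes "\<rho> \<in> carrier_mat (d*d) (d*d)"
  shows "ent_fid d N \<rho>
    = (\<Sum>k<d*d. complex_of_real (e k) * sesq (d*d) \<rho> (swap_conj d (L k)) (swap_conj d (L k))) / of_nat d"
proof -
  have "(\<Sum>a<d*d. \<Sum>b<d*d. \<rho> $$ (a,b) * choi d N $$ (swap_index d a, swap_index d b))
      = (\<Sum>a<d*d. \<Sum>b<d*d. \<Sum>k<d*d. complex_of_real (e k)
          * (cnj (swap_conj d (L k) a) * \<rho> $$ (a,b) * swap_conj d (L k) b))"
    by (simp add: choi_eigdec swap_index_less swap_conj_def sum_distrib_left mult_ac)
  also have "\<dots> = (\<Sum>k<d*d. \<Sum>a<d*d. \<Sum>b<d*d. complex_of_real (e k)
          * (cnj (swap_conj d (L k) a) * \<rho> $$ (a,b) * swap_conj d (L k) b))"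
    by (rule sum_rotate3[symmetric])
  finally show ?thesis
    unfolding ent_fid_choi[OF channel] sesq_def by (simp add: sum_distrib_left)
qed

lemma sum_eigval: "(\<Sum>k<d*d. e k) = real d"
proof -
  have "(\<Sum>a<d*d. choi d N $$ (a,a)) = (\<Sum>k<d*d. complex_of_real (e k) * (\<Sum>a<d*d. cnj (L k $ a) * L k $ a))"
    by (simp add: choi_eigdec sum_distrib_left mult_ac) (rule sum.swap)
  then have "complex_of_real (\<Sum>k<d*d. e k) = of_nat d"
    using eigvec_orthonormal trace_choi[OF channel] unfolding orthonormal_def by simp
  then show ?thesis
    using of_real_eq_iff by fastforce
qed

lemma eigval_0_pos: "0 < e 0"
proof (rule ccontr)
  assume "\<not> 0 < e 0"
  then have "\<forall>k<d*d. e k = 0"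
    using eigval_nonneg eigval_le_eigval_0 by force
  then show False
    using sum_eigval dim_pos by simp
qed

lemma ent_fid_le_and_eq_iff:
  assumes "density (d*d) \<rho>"
  shows "Re (ent_fid d N \<rho>) \<le> e 0 / real d \<and>
    (Re (ent_fid d N \<rho>) = e 0 / real d \<longleftrightarrow>
      (\<forall>k<d*d. e k \<noteq> e 0 \<longrightarrow> sesq (d*d) \<rho> (swap_conj d (L k)) (swap_conj d (L k)) = 0))"
proof -
  have "Re (ent_fid d N \<rho>) = (\<Sum>k<d*d. e k * Re (sesq (d*d) \<rho> (swap_conj d (L k)) (swap_conj d (L k)))) / real d"
    using assms unfolding density_def psd_def by (simp add: ent_fid_eigdec Re_divide_of_nat Re_sum)
  then show ?thesis
    using density_weighted_sesq_le_max[OF swap_conj_eigvec_orthonormal _ assms] eigval_le_eigval_0 dim_pos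
    by (simp add: divide_right_mono)
qed

lemma chan_O_eq_eigval_0: "chan_O d N = e 0 / real d"
  unfolding chan_O_def
proof (rule cSup_eq_maximum)
  have "0 < d*d"
    using dim_pos by simp
  let ?\<rho> = "outer (d*d) (swap_conj d (L 0))"
  have \<rho>: "density (d*d) ?\<rho>"
    by (rule density_outer[OF swap_conj_eigvec_orthonormal \<open>0 < d*d\<close>])
  have "sesq (d*d) ?\<rho> (swap_conj d (L k)) (swap_conj d (L k)) = (if k = 0 then 1 else 0)"
    if "k < d*d" for k
    using swap_conj_eigvec_orthonormal that \<open>0 < d*d\<close> unfolding orthonormal_def sesq_outer by auto
  then have "Re (ent_fid d N ?\<rho>) = e 0 / real d"
    using ent_fid_le_and_eq_iff[OF \<rho>] by auto
  then show "e 0 / real d \<in> {Re (ent_fid d N \<rho>) |\<rho>. density (d*d) \<rho>}"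
    using \<rho> by force
qed (use ent_fid_le_and_eq_iff in auto)

lemma opnorm_choi_eq_eigval_0: "opnorm (choi d N) = e 0"
  using opnorm_spectral[OF eigvec_orthonormal _ choi_eigdec] eigval_nonneg eigval_le_eigval_0 dim_pos
  by (simp add: choi_def)

lemma mtrace_kraus_eq_eigval: "i < d*d \<Longrightarrow> mtrace (cadj (kraus_of d e L i) * kraus_of d e L i) = e i"
  using mtrace_cadj_kraus_of eigval_nonneg eigvec_carrier eigvec_orthonormal
  unfolding orthonormal_def cinner_def by simp

lemma ent_fid_eq_chan_O_iff_support:
  assumes \<Lambda>: "density (d*d) \<Lambda>"
  shows "Re (ent_fid d N \<Lambda>) = chan_O d N \<longleftrightarrow>
    support (d*d) \<Lambda> \<subseteq> span_of (d*d) (\<lambda>i. opket d (cadj (kraus_of d e L i))) {i. i < d*d \<and> e i = e 0}"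
    (is "_ \<longleftrightarrow> _ \<subseteq> span_of _ ?s ?T")
proof -
  have psd: "psd (d*d) \<Lambda>"
    using \<Lambda> unfolding density_def by simp
  have s: "\<forall>i\<in>?T. \<forall>a<d*d. ?s i $ a = complex_of_real (sqrt (e i)) * swap_conj d (L i) a"
    using opket_cadj_kraus_of by blast
  have c: "\<forall>i\<in>?T. complex_of_real (sqrt (e i)) \<noteq> 0"
    using eigval_0_pos by simp
  show ?thesis
    unfolding chan_O_eq_eigval_0 ent_fid_le_and_eq_iff[OF \<Lambda>, THEN conjunct2]
    using support_subset_span_if_kernel[OF swap_conj_eigvec_orthonormal psd _ c s]
      kernel_if_support_subset_span[OF swap_conj_eigvec_orthonormal _ _ s] psd
    unfolding psd_def by auto
qed

end

theorem theorem1: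
  fixes d :: nat and N :: "complex mat \<Rightarrow> complex mat"
    and e :: "nat \<Rightarrow> real" and L :: "nat \<Rightarrow> complex vec"
  assumes "d \<ge> 1"
    and "quantum_channel d N"
    and "std_eigdec d N e L"
  defines "K \<equiv> kraus_of d e L"
  shows "(\<forall>\<rho>. density (d*d) \<rho> \<longrightarrow> Re (ent_fid d N \<rho>) \<le> chan_O d N)
    \<and> chan_O d N = Re (mtrace (cadj (K 0) * K 0)) / real d
    \<and> chan_O d N = opnorm (choi d N) / real d
    \<and> {\<Lambda>. density (d*d) \<Lambda> \<and> Re (ent_fid d N \<Lambda>) = chan_O d N}
      = {\<Lambda>. density (d*d) \<Lambda> \<and>
           support (d*d) \<Lambda> \<subseteq> span_of (d*d) (\<lambda>i. opket d (cadj (K i)))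
             {i. i < d*d \<and> mtrace (cadj (K i) * K i) = mtrace (cadj (K 0) * K 0)}}"
proof -
  interpret channel_eigdec d N e L
    using assms by unfold_locales
  have "0 < d*d"
    using assms(1) by simp
  then have top: "{i. i < d*d \<and> mtrace (cadj (K i) * K i) = mtrace (cadj (K 0) * K 0)}
      = {i. i < d*d \<and> e i = e 0}"
    unfolding K_def using mtrace_kraus_eq_eigval by auto
  show ?thesis
    unfolding top unfolding K_def
    using ent_fid_le_and_eq_iff chan_O_eq_eigval_0 opnorm_choi_eq_eigval_0
      mtrace_kraus_eq_eigval[OF \<open>0 < d*d\<close>] ent_fid_eq_chan_O_iff_support
    by auto
qed

end
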